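(* Let $\mathcal{C}$ be a $\chi$SPN (characteristic sum-product network, as defined in the context) over the random variables $\mathbf{X}=\{X_j\}_{j=1}^d$, all of whose leaf nodes are univariate, and let $\boldsymbol{X}=(X_1,\dots,X_d)$ be a random vector whose characteristic function is the function $\varphi_{\mathcal{C}}$ computed at the root of $\mathcal{C}$. Suppose that for every leaf $\mathrm{L}$ of $\mathcal{C}$ one has $\int_{\mathbb{R}}|\varphi_{\mathrm{L}}(t)|\,\mathrm{d}t<\infty$. Then $\boldsymbol{X}$ has a continuous probability density function $f_{\boldsymbol{X}}$, given for $\boldsymbol{x}\in\mathbb{R}^d$ by $$f_{\boldsymbol{X}}(\boldsymbol{x})=\frac{1}{(2\pi)^d}\int_{\boldsymbol{t}\in\mathbb{R}^d}\exp\left(-\mathrm{i}\,\boldsymbol{t}^{\top}\boldsymbol{x}\right)\varphi_{\mathcal{C}}(\boldsymbol{t})\,\lambda_d(\mathrm{d}\boldsymbol{t}),$$ where $\lambda_d$ is the Lebesgue measure on $(\mathbb{R}^d,\mathcal{B}(\mathbb{R}^d))$.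
   Context: The characteristic function (CF) of a random vector $\boldsymbol{X}\in\mathbb{R}^d$ with distribution $\mu_{\boldsymbol{X}}$ is $\varphi_{\boldsymbol{X}}(\boldsymbol{t})=\mathbb{E}[\exp(\mathrm{i}\boldsymbol{t}^\top\boldsymbol{X})]=\int_{\mathbb{R}^d}\exp(\mathrm{i}\boldsymbol{t}^\top\boldsymbol{x})\,\mu_{\boldsymbol{X}}(\mathrm{d}\boldsymbol{x})$, $\boldsymbol{t}\in\mathbb{R}^d$. A $\chi$SPN (with its parameters fixed; in the paper these parameters are output by a neural network given an intervened causal graph) over random variables $X_1,\dots,X_d$ is a rooted directed acyclic graph whose nodes are sum nodes, product nodes and leaf nodes. Each leaf $\mathrm{L}$ has as scope a single variable $X_j$ and carries the characteristic function $\varphi_{\mathrm{L}}:\mathbb{R}\to\mathbb{C}$ of a univariate probability distribution (e.g. categorical, normal, or $\alpha$-stable). The scope $\mathrm{sc}(\mathrm{N})$ of an inner node $\mathrm{N}$ is the union of the scopes of its children $\mathrm{ch}(\mathrm{N})$. The network is complete (all children of each sum node have the same scope) and decomposable (the children of each product node have pairwise disjoint scopes). For a node $\mathrm{N}$ and $\boldsymbol{t}$ indexed by the variables in its scope, writing $\boldsymbol{t}_{\mathrm{sc}(\mathrm{N})}$ for the restriction of $\boldsymbol{t}$ to those coordinates, the node's CF is defined recursively: for a product node, $\varphi_{\mathrm{P}}(\boldsymbol{t})=\prod_{\mathrm{N}\in\mathrm{ch}(\mathrm{P})}\varphi_{\mathrm{N}}(\boldsymbol{t}_{\mathrm{sc}(\mathrm{N})})$;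 for a sum node with weights $w_{\mathrm{S},\mathrm{N}}\ge 0$, $\sum_{\mathrm{N}\in\mathrm{ch}(\mathrm{S})}w_{\mathrm{S},\mathrm{N}}=1$, $\varphi_{\mathrm{S}}(\boldsymbol{t})=\sum_{\mathrm{N}\in\mathrm{ch}(\mathrm{S})}w_{\mathrm{S},\mathrm{N}}\varphi_{\mathrm{N}}(\boldsymbol{t})$. The root's scope is $\{X_1,\dots,X_d\}$ and $\varphi_{\mathcal{C}}$ denotes the CF at the root. *)

theory Defs
  imports "HOL-Probability.Probability"
begin

text \<open>A characteristic sum-product network over the variables indexed by the
  finite type 'n (so d = CARD('n)). Shared sub-DAGs are represented by unfolding
  into a tree, which does not change the CF computed at the root.
  Leaf j M: univariate leaf with scope X_j carrying the distribution M on the reals;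
  its CF is char M. SumN: list of (weight, child).\<close>

datatype 'n chispn =
    Leaf 'n "real measure"
  | SumN "(real \<times> 'n chispn) list"
  | ProdN "'n chispn list"

fun sc :: "'n chispn \<Rightarrow> 'n set" where
  "sc (Leaf j M) = {j}"
| "sc (SumN cs) = (\<Union>p\<in>set cs. sc (snd p))"
| "sc (ProdN cs) = (\<Union>N\<in>set cs. sc N)"

text \<open>CF of a node; arguments t outside the scope are ignored, so this equals
  the paper's recursion using restrictions t_sc(N).\<close>
fun phi :: "'n chispn \<Rightarrow> real ^ 'n \<Rightarrow> complex" where
  "phi (Leaf j M) t = char M (t $ j)"
| "phi (SumN cs) t = (\<Sum>p\<leftarrow>cs. complex_of_real (fst p) * phi (snd p) t)"
| "phi (ProdN cs) t = (\<Prod>N\<leftarrow>cs. phi N t)"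

fun leaves :: "'n chispn \<Rightarrow> ('n \<times> real measure) set" where
  "leaves (Leaf j M) = {(j, M)}"
| "leaves (SumN cs) = (\<Union>p\<in>set cs. leaves (snd p))"
| "leaves (ProdN cs) = (\<Union>N\<in>set cs. leaves N)"

fun valid :: "'n chispn \<Rightarrow> bool" where
  "valid (Leaf j M) = real_distribution M"
| "valid (SumN cs) =
     ((\<forall>p\<in>set cs. 0 \<le> fst p \<and> valid (snd p)) \<and>
      (\<Sum>p\<leftarrow>cs. fst p) = 1 \<and>
      (\<forall>p\<in>set cs. \<forall>q\<in>set cs. sc (snd p) = sc (snd q)))"
| "valid (ProdN cs) =
     ((\<forall>N\<in>set cs. valid N) \<and>
      (\<forall>i<length cs. \<forall>k<length cs. i \<noteq> k \<longrightarrow> sc (cs ! i) \<inter> sc (cs ! k) = {}))"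

end

theory Submission
  imports Defs
begin

text \<open>Fourier inversion by Gaussian smoothing. If \<open>Z\<close> is standard normal and independent of
  \<open>X\<close>, then \<open>X + \<sigma> Z\<close> has the density
  \<open>f\<^sub>\<sigma>(x) = (2\<pi>)\<^sup>-\<^sup>d \<integral> exp(-i t\<cdot>x) \<phi>(t) exp(-\<sigma>\<^sup>2|t|\<^sup>2/2) dt\<close>, by Fubini and the Fourier
  transform of the Gaussian. When \<open>\<phi>\<close> is integrable, \<open>f\<^sub>\<sigma>\<close> is bounded uniformly in \<open>\<sigma>\<close> and
  converges pointwise to \<open>f(x) = (2\<pi>)\<^sup>-\<^sup>d \<integral> exp(-i t\<cdot>x) \<phi>(t) dt\<close>, so dominated convergence lets
  \<open>\<sigma> \<rightarrow> 0\<close> on both sides of \<open>E h(X + \<sigma> Z) = \<integral> h f\<^sub>\<sigma>\<close> for continuous \<open>h\<close> supported in a box.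
  Approximating indicators of open boxes by such \<open>h\<close> shows that \<open>f\<close> is the density of \<open>X\<close>.

  For a \<chi>SPN, induction over the network gives \<open>|\<phi>\<^sub>N(t)| \<le> \<Prod>\<^bsub>j \<in> sc N\<^esub> \<beta>\<^sub>j(t\<^sub>j)\<close>, where
  \<open>\<beta>\<^sub>j\<close> is the sum of \<open>|\<phi>\<^sub>L|\<close> over the leaves \<open>L\<close> with scope \<open>X\<^sub>j\<close>: a sum node is a convex
  combination of children with its own scope, a product node multiplies children with disjoint
  scopes. Hence \<open>\<phi>\<^sub>C\<close> is dominated by an integrable product and the inversion applies.\<close>

section \<open>Integrals of coordinatewise products\<close>

lemma
  fixes f :: "'a::euclidean_space \<Rightarrow> real \<Rightarrow> 'b::{real_normed_field, banach, second_countable_topology}"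
  assumes int: "\<And>b. b \<in> Basis \<Longrightarrow> integrable lborel (f b)"
  shows integrable_lborel_prod: "integrable lborel (\<lambda>x::'a. \<Prod>b\<in>Basis. f b (x \<bullet> b))"
    and integral_lborel_prod:
      "(\<integral>x. (\<Prod>b\<in>Basis. f b (x \<bullet> b)) \<partial>(lborel::'a measure)) = (\<Prod>b\<in>Basis. integral\<^sup>L lborel (f b))"
proof -
  interpret product_sigma_finite "\<lambda>_::'a. lborel :: real measure" by standard
  define T where "T = (\<lambda>g::'a \<Rightarrow> real. \<Sum>b\<in>Basis. g b *\<^sub>R b)"
  have [measurable]: "T \<in> measurable (\<Pi>\<^sub>M b\<in>Basis. lborel) borel"
    unfolding T_def by measurable
  have "T g \<bullet> b = g b" if "b \<in> Basis" for g b
    using that by (simp add: T_def inner_sum_left inner_Basis if_distrib cong: if_cong)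
  then have eq: "(\<lambda>g. \<Prod>b\<in>Basis. f b (T g \<bullet> b)) = (\<lambda>g. \<Prod>b\<in>Basis. f b (g b))"
    by (intro ext prod.cong) simp_all
  have [measurable]: "(\<lambda>x::'a. \<Prod>b\<in>Basis. f b (x \<bullet> b)) \<in> borel_measurable borel"
    using int by (intro borel_measurable_prod) (auto dest: borel_measurable_integrable)
  have lborel: "lborel = distr (\<Pi>\<^sub>M b\<in>Basis. lborel) borel T"
    unfolding T_def by (rule lborel_eq)
  have "integrable (\<Pi>\<^sub>M b\<in>Basis. lborel) (\<lambda>g. \<Prod>b\<in>Basis. f b (g b))"
    by (rule product_integrable_prod) (auto intro: int)
  then show "integrable lborel (\<lambda>x::'a. \<Prod>b\<in>Basis. f b (x \<bullet> b))"
    by (subst lborel, subst integrable_distr_eq) (auto simp: eq)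
  show "(\<integral>x. (\<Prod>b\<in>Basis. f b (x \<bullet> b)) \<partial>(lborel::'a measure)) = (\<Prod>b\<in>Basis. integral\<^sup>L lborel (f b))"
    by (subst lborel, subst integral_distr) (auto simp: eq intro!: product_integral_prod int)
qed

lemma integrable_lborel_prod_vec:
  fixes b :: "'n::finite \<Rightarrow> real \<Rightarrow> real"
  assumes "\<And>j. integrable lborel (b j)"
  shows "integrable lborel (\<lambda>t::real ^ 'n. \<Prod>j\<in>UNIV. b j (t $ j))"
proof -
  let ?e = "\<lambda>j::'n. axis j (1::real)"
  have inj: "inj ?e"
    by (auto simp: inj_def axis_eq_axis)
  have Basis: "(Basis :: (real ^ 'n) set) = range ?e"
    unfolding Basis_vec_def by auto
  have "(\<Prod>e\<in>Basis. b (inv ?e e) (t \<bullet> e)) = (\<Prod>j\<in>UNIV. b j (t $ j))" for t :: "real ^ 'n"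
    unfolding Basis by (simp add: prod.reindex[OF inj] inv_f_f[OF inj] inner_axis)
  then show ?thesis
    using integrable_lborel_prod[of "\<lambda>e::real ^ 'n. b (inv ?e e)"] assms by simp
qed

lemma integrable_mult_indicator_cbox:
  fixes c :: real
  shows "integrable lborel (\<lambda>x::'b::euclidean_space. c * indicator (cbox l u) x)"
  using emeasure_bounded_finite[of "cbox l u"]
  by (intro integrable_mult_right integrable_real_indicator) auto

section \<open>Fourier transform\<close>

definition fourier_transform :: "('a::euclidean_space \<Rightarrow> complex) \<Rightarrow> 'a \<Rightarrow> complex" where
  "fourier_transform f x = (CLINT t|lborel. exp (- (\<i> * complex_of_real (t \<bullet> x))) * f t)"

lemma norm_exp_minus_i_times: "norm (exp (- (\<i> * complex_of_real r))) = 1"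
  by (metis mult_minus_right norm_exp_i_times of_real_minus)

lemma norm_fourier_transform_le:
  assumes "integrable lborel f"
  shows "norm (fourier_transform f x) \<le> (\<integral>t. norm (f t) \<partial>lborel)"
proof -
  have "norm (fourier_transform f x) \<le> (\<integral>t. norm (exp (- (\<i> * complex_of_real (t \<bullet> x))) * f t) \<partial>lborel)"
    unfolding fourier_transform_def by (rule integral_norm_bound)
  then show ?thesis
    by (simp add: norm_mult norm_exp_minus_i_times)
qed

lemma continuous_on_fourier_transform:
  assumes f: "integrable lborel f"
  shows "continuous_on UNIV (fourier_transform f)"
proof (intro continuous_at_imp_continuous_on ballI continuous_at_sequentiallyI)
  fix a and u :: "nat \<Rightarrow> 'a" assume u: "u \<longlonglongrightarrow> a"
  show "(\<lambda>n. fourier_transform f (u n)) \<longlonglongrightarrow> fourier_transform f a"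
    unfolding fourier_transform_def
  proof (rule integral_dominated_convergence[where w="\<lambda>t. norm (f t)"])
    show "AE t in lborel. (\<lambda>n. exp (- (\<i> * complex_of_real (t \<bullet> u n))) * f t)
        \<longlonglongrightarrow> exp (- (\<i> * complex_of_real (t \<bullet> a))) * f t"
      by (intro AE_I2 tendsto_intros u)
    show "AE t in lborel. norm (exp (- (\<i> * complex_of_real (t \<bullet> u n))) * f t) \<le> norm (f t)" for n
      by (intro AE_I2) (simp add: norm_mult norm_exp_minus_i_times)
  qed (use f in auto)
qed

section \<open>Gaussians\<close>

definition gauss_cf :: "real \<Rightarrow> 'a::real_normed_vector \<Rightarrow> complex" where
  "gauss_cf \<sigma> t = complex_of_real (exp (- (\<sigma>\<^sup>2 * (norm t)\<^sup>2) / 2))"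

definition gauss_kernel :: "real \<Rightarrow> 'a::euclidean_space \<Rightarrow> real" where
  "gauss_kernel \<sigma> y = (\<Prod>b\<in>Basis. normal_density 0 \<sigma> (y \<bullet> b))"

lemma norm_gauss_cf_le_1: "norm (gauss_cf \<sigma> t) \<le> 1"
  by (simp add: gauss_cf_def)

lemma borel_measurable_gauss_cf[measurable]: "gauss_cf \<sigma> \<in> borel_measurable borel"
  unfolding gauss_cf_def by measurable

lemma gauss_kernel_nonneg: "0 \<le> gauss_kernel \<sigma> y"
  unfolding gauss_kernel_def by (intro prod_nonneg) (auto simp: normal_density_nonneg)

lemma borel_measurable_gauss_kernel[measurable]: "gauss_kernel \<sigma> \<in> borel_measurable borel"
  unfolding gauss_kernel_def normal_density_def by measurable

lemma gauss_kernel_le: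
  fixes y :: "'a::euclidean_space"
  shows "gauss_kernel \<sigma> y \<le> (1 / sqrt (2 * pi * \<sigma>\<^sup>2)) ^ DIM('a)"
proof -
  have "gauss_kernel \<sigma> y \<le> (\<Prod>b\<in>(Basis::'a set). 1 / sqrt (2 * pi * \<sigma>\<^sup>2))"
    unfolding gauss_kernel_def
  proof (intro prod_mono conjI)
    fix b :: 'a
    show "0 \<le> normal_density 0 \<sigma> (y \<bullet> b)" by (rule normal_density_nonneg)
    show "normal_density 0 \<sigma> (y \<bullet> b) \<le> 1 / sqrt (2 * pi * \<sigma>\<^sup>2)"
      unfolding normal_density_def by (intro mult_left_le) auto
  qed
  then show ?thesis by simp
qed

lemma gauss_kernel_scaleR:
  assumes "0 < \<sigma>"
  shows "gauss_kernel \<sigma> (\<sigma> *\<^sub>R (z::'a::euclidean_space)) = gauss_kernel 1 z / \<sigma> ^ DIM('a)"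
proof -
  have "normal_density 0 \<sigma> (\<sigma> * s) = normal_density 0 1 s / \<sigma>" for s
    using assms by (simp add: normal_density_def power_mult_distrib real_sqrt_mult)
  then show ?thesis unfolding gauss_kernel_def by (simp add: prod_dividef)
qed

lemma
  assumes "0 < \<sigma>"
  shows integrable_gauss_kernel: "integrable lborel (gauss_kernel \<sigma> :: 'a::euclidean_space \<Rightarrow> real)"
    and integral_gauss_kernel: "integral\<^sup>L lborel (gauss_kernel \<sigma> :: 'a \<Rightarrow> real) = 1"
  using integrable_lborel_prod[of "\<lambda>b. normal_density 0 \<sigma>"] integral_lborel_prod[of "\<lambda>b. normal_density 0 \<sigma>"] assms
  unfolding gauss_kernel_def[abs_def] by auto

lemma
  fixes \<sigma> u :: real
  assumes \<sigma>: "0 < \<sigma>"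
  shows integrable_fourier_gauss_cf_real:
      "integrable lborel (\<lambda>s. exp (- (\<i> * complex_of_real (s * u))) * gauss_cf \<sigma> s)"
    and fourier_transform_gauss_cf_real:
      "fourier_transform (gauss_cf \<sigma>) u = complex_of_real (2 * pi * normal_density 0 \<sigma> u)"
proof -
  define f where "f x = std_normal_density x *\<^sub>R iexp (- u / \<sigma> * x)" for x
  have [measurable]: "f \<in> borel_measurable borel"
    unfolding f_def by measurable
  have "integrable lborel f"
    by (rule Bochner_Integration.integrable_bound[OF integrable_normal_density[of 1 0]])
       (auto simp: f_def norm_mult normal_density_nonneg)
  then have int: "integrable lborel (\<lambda>s. f (0 + \<sigma> * s))"
    using lborel_integrable_real_affine[of f \<sigma> 0] \<sigma> by simp
  have f_scaled: "f (0 + \<sigma> * s) =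
      (1 / sqrt (2 * pi)) *\<^sub>R (exp (- (\<i> * complex_of_real (s * u))) * gauss_cf \<sigma> s)" for s
    using \<sigma> by (simp add: f_def gauss_cf_def normal_density_def power_mult_distrib mult_ac scaleR_conv_of_real)
  show "integrable lborel (\<lambda>s. exp (- (\<i> * complex_of_real (s * u))) * gauss_cf \<sigma> s)"
    using integrable_scaleR_right[OF int, of "sqrt (2 * pi)"] unfolding f_scaled by simp
  have "complex_of_real (exp (- ((- u / \<sigma>)\<^sup>2) / 2)) = char std_normal_distribution (- u / \<sigma>)"
    by (simp add: char_std_normal_distribution)
  also have "\<dots> = integral\<^sup>L lborel f"
    unfolding char_def f_def by (subst integral_density) (auto simp: normal_density_nonneg)
  also have "\<dots> = \<sigma> *\<^sub>R (\<integral>s. f (0 + \<sigma> * s) \<partial>lborel)"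
    using lborel_integral_real_affine[of \<sigma> f 0] \<sigma> by simp
  also have "\<dots> = (\<sigma> / sqrt (2 * pi)) *\<^sub>R fourier_transform (gauss_cf \<sigma>) u"
    unfolding f_scaled fourier_transform_def by simp
  finally have "fourier_transform (gauss_cf \<sigma>) u =
      complex_of_real (sqrt (2 * pi) / \<sigma> * exp (- ((- u / \<sigma>)\<^sup>2) / 2))"
    using \<sigma> by (simp add: field_simps scaleR_conv_of_real)
  also have "sqrt (2 * pi) / \<sigma> * exp (- ((- u / \<sigma>)\<^sup>2) / 2) = 2 * pi * normal_density 0 \<sigma> u"
    using \<sigma> by (simp add: normal_density_def real_sqrt_mult power_divide field_simps)
  finally show "fourier_transform (gauss_cf \<sigma>) u = complex_of_real (2 * pi * normal_density 0 \<sigma> u)" .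
qed

lemma
  fixes y :: "'a::euclidean_space"
  assumes \<sigma>: "0 < \<sigma>"
  shows integrable_fourier_gauss_cf:
      "integrable lborel (\<lambda>t::'a. exp (- (\<i> * complex_of_real (t \<bullet> y))) * gauss_cf \<sigma> t)"
    and fourier_transform_gauss_cf:
      "fourier_transform (gauss_cf \<sigma>) y = complex_of_real ((2 * pi) ^ DIM('a) * gauss_kernel \<sigma> y)"
proof -
  define f where "f b s = exp (- (\<i> * complex_of_real (s * (y \<bullet> b)))) * gauss_cf \<sigma> s" for b :: 'a and s :: real
  have factor: "exp (- (\<i> * complex_of_real (t \<bullet> y))) * gauss_cf \<sigma> t = (\<Prod>b\<in>Basis. f b (t \<bullet> b))" for t :: 'a
  proof -
    have "t \<bullet> y = (\<Sum>b\<in>Basis. (t \<bullet> b) * (y \<bullet> b))"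
      by (rule euclidean_inner)
    then have exp_i: "exp (- (\<i> * complex_of_real (t \<bullet> y))) =
        (\<Prod>b\<in>Basis. exp (- (\<i> * complex_of_real ((t \<bullet> b) * (y \<bullet> b)))))"
      by (simp add: of_real_sum sum_distrib_left sum_negf[symmetric] exp_sum)
    have "(norm t)\<^sup>2 = (\<Sum>b\<in>Basis. (t \<bullet> b) * (t \<bullet> b))"
      by (subst euclidean_inner[symmetric]) (simp add: power2_norm_eq_inner)
    then have "gauss_cf \<sigma> t = (\<Prod>b\<in>Basis. gauss_cf \<sigma> (t \<bullet> b))"
      by (simp add: gauss_cf_def sum_distrib_left sum_negf[symmetric] sum_divide_distrib
          power2_eq_square exp_sum of_real_prod)
    then show ?thesis
      unfolding exp_i f_def by (simp add: prod.distrib)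
  qed
  have int: "integrable lborel (f b)" for b
    unfolding f_def by (rule integrable_fourier_gauss_cf_real[OF \<sigma>])
  show "integrable lborel (\<lambda>t::'a. exp (- (\<i> * complex_of_real (t \<bullet> y))) * gauss_cf \<sigma> t)"
    unfolding factor by (rule integrable_lborel_prod[OF int])
  have "fourier_transform (gauss_cf \<sigma>) y = (\<Prod>b\<in>(Basis::'a set). integral\<^sup>L lborel (f b))"
    unfolding fourier_transform_def factor by (rule integral_lborel_prod[OF int])
  also have "\<dots> = (\<Prod>b\<in>(Basis::'a set). complex_of_real (2 * pi * normal_density 0 \<sigma> (y \<bullet> b)))"
  proof (rule prod.cong)
    fix b :: 'a
    show "integral\<^sup>L lborel (f b) = complex_of_real (2 * pi * normal_density 0 \<sigma> (y \<bullet> b))"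
      using fourier_transform_gauss_cf_real[OF \<sigma>, of "y \<bullet> b"]
      by (simp add: f_def[abs_def] fourier_transform_def mult.commute)
  qed simp
  also have "\<dots> = complex_of_real ((2 * pi) ^ DIM('a) * gauss_kernel \<sigma> y)"
    by (simp add: gauss_kernel_def prod.distrib of_real_prod)
  finally show "fourier_transform (gauss_cf \<sigma>) y = complex_of_real ((2 * pi) ^ DIM('a) * gauss_kernel \<sigma> y)" .
qed

lemma tendsto_fourier_transform_gauss_damped:
  assumes f: "integrable lborel f" and \<sigma>: "\<sigma> \<longlonglongrightarrow> 0"
  shows "(\<lambda>k. fourier_transform (\<lambda>t. f t * gauss_cf (\<sigma> k) t) x) \<longlonglongrightarrow> fourier_transform f x"
  unfolding fourier_transform_def
proof (rule integral_dominated_convergence[where w="\<lambda>t. norm (f t)"])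
  have "(\<lambda>k. exp (- (\<i> * complex_of_real (t \<bullet> x))) * (f t * gauss_cf (\<sigma> k) t))
      \<longlonglongrightarrow> exp (- (\<i> * complex_of_real (t \<bullet> x))) * (f t * gauss_cf 0 t)" for t
    unfolding gauss_cf_def by (intro tendsto_intros \<sigma>) simp
  then show "AE t in lborel. (\<lambda>k. exp (- (\<i> * complex_of_real (t \<bullet> x))) * (f t * gauss_cf (\<sigma> k) t))
      \<longlonglongrightarrow> exp (- (\<i> * complex_of_real (t \<bullet> x))) * f t"
    by (simp add: gauss_cf_def)
  show "AE t in lborel. norm (exp (- (\<i> * complex_of_real (t \<bullet> x))) * (f t * gauss_cf (\<sigma> k) t)) \<le> norm (f t)" for k
    by (intro AE_I2) (simp add: norm_mult norm_exp_minus_i_times mult_left_le norm_gauss_cf_le_1)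
qed (use f in auto)

lemma lborel_integral_gauss_kernel_affine:
  fixes h :: "'a::euclidean_space \<Rightarrow> real"
  assumes [measurable]: "h \<in> borel_measurable borel" and \<sigma>: "0 < \<sigma>"
  shows "(\<integral>x. h x * gauss_kernel \<sigma> (x - y) \<partial>lborel) = (\<integral>z. h (y + \<sigma> *\<^sub>R z) * gauss_kernel 1 z \<partial>lborel)"
proof -
  have "(\<integral>x. h x * gauss_kernel \<sigma> (x - y) \<partial>lborel) =
      (\<integral>x. h x * gauss_kernel \<sigma> (x - y) \<partial>density (distr lborel borel (\<lambda>z. y + \<sigma> *\<^sub>R z)) (\<lambda>_. \<bar>\<sigma>\<bar> ^ DIM('a)))"
    using lborel_affine[of \<sigma> y] \<sigma> by simp
  also have "\<dots> = (\<integral>x. \<bar>\<sigma>\<bar> ^ DIM('a) *\<^sub>R (h x * gauss_kernel \<sigma> (x - y)) \<partial>distr lborel borel (\<lambda>z. y + \<sigma> *\<^sub>R z))"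
    by (subst integral_density) auto
  also have "\<dots> = (\<integral>z. \<bar>\<sigma>\<bar> ^ DIM('a) *\<^sub>R (h (y + \<sigma> *\<^sub>R z) * gauss_kernel \<sigma> (\<sigma> *\<^sub>R z)) \<partial>lborel)"
    by (subst integral_distr) auto
  also have "\<dots> = (\<integral>z. h (y + \<sigma> *\<^sub>R z) * gauss_kernel 1 z \<partial>lborel)"
    using \<sigma> by (simp add: gauss_kernel_scaleR)
  finally show ?thesis .
qed

lemma norm_mult_gauss_kernel_le:
  fixes h :: "'a::euclidean_space \<Rightarrow> real"
  assumes "\<bar>h x\<bar> \<le> indicator (cbox l u) x"
  shows "norm (h x * gauss_kernel \<sigma> (x - y)) \<le> (1 / sqrt (2 * pi * \<sigma>\<^sup>2)) ^ DIM('a) * indicator (cbox l u) x"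
  using mult_mono[OF assms gauss_kernel_le] by (simp add: abs_mult gauss_kernel_nonneg mult.commute)

lemma norm_integral_gauss_kernel_shift_le:
  fixes h :: "'a::euclidean_space \<Rightarrow> real"
  assumes [measurable]: "h \<in> borel_measurable borel" and h: "\<And>x. \<bar>h x\<bar> \<le> 1"
  shows "norm (\<integral>z. h (y + \<sigma> *\<^sub>R z) * gauss_kernel 1 z \<partial>lborel) \<le> 1"
proof -
  have bound: "norm (h (y + \<sigma> *\<^sub>R z) * gauss_kernel 1 z) \<le> gauss_kernel 1 z" for z
    using h[of "y + \<sigma> *\<^sub>R z"] gauss_kernel_nonneg[of 1 z] by (simp add: abs_mult mult_left_le_one_le)
  have int: "integrable lborel (\<lambda>z. h (y + \<sigma> *\<^sub>R z) * gauss_kernel 1 z)"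
  proof (rule Bochner_Integration.integrable_bound[OF integrable_gauss_kernel[of 1]])
    show "AE z in lborel. norm (h (y + \<sigma> *\<^sub>R z) * gauss_kernel 1 z) \<le> norm (gauss_kernel 1 z)"
      using bound by (simp add: gauss_kernel_nonneg)
  qed simp_all
  have "norm (\<integral>z. h (y + \<sigma> *\<^sub>R z) * gauss_kernel 1 z \<partial>lborel) \<le>
      (\<integral>z. norm (h (y + \<sigma> *\<^sub>R z) * gauss_kernel 1 z) \<partial>lborel)"
    by (rule integral_norm_bound)
  also have "\<dots> \<le> (\<integral>z. gauss_kernel 1 (z::'a) \<partial>lborel)"
    by (intro Bochner_Integration.integral_mono integrable_norm int integrable_gauss_kernel bound) simp
  finally show ?thesis
    using integral_gauss_kernel[of 1, where 'a='a] by simp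
qed

lemma tendsto_integral_gauss_kernel_shift:
  fixes h :: "'a::euclidean_space \<Rightarrow> real"
  assumes h_cont: "continuous_on UNIV h" and h: "\<And>x. \<bar>h x\<bar> \<le> 1" and \<sigma>: "\<sigma> \<longlonglongrightarrow> 0"
  shows "(\<lambda>k. \<integral>z. h (y + \<sigma> k *\<^sub>R z) * gauss_kernel 1 z \<partial>lborel) \<longlonglongrightarrow> h y"
proof -
  have [measurable]: "h \<in> borel_measurable borel"
    by (rule borel_measurable_continuous_onI[OF h_cont])
  have "(\<lambda>k. \<integral>z. h (y + \<sigma> k *\<^sub>R z) * gauss_kernel 1 z \<partial>lborel) \<longlonglongrightarrow> (\<integral>z. h y * gauss_kernel 1 (z::'a) \<partial>lborel)"
  proof (rule integral_dominated_convergence[where w="gauss_kernel 1"])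
    have "(\<lambda>k. h (y + \<sigma> k *\<^sub>R z)) \<longlonglongrightarrow> h (y + 0 *\<^sub>R z)" for z :: 'a
      by (intro continuous_on_tendsto_compose[OF h_cont] tendsto_intros \<sigma>) auto
    then show "AE z in lborel. (\<lambda>k. h (y + \<sigma> k *\<^sub>R z) * gauss_kernel 1 z) \<longlonglongrightarrow> h y * gauss_kernel 1 z"
      by (intro AE_I2 tendsto_intros) simp
    show "AE z in lborel. norm (h (y + \<sigma> k *\<^sub>R z) * gauss_kernel 1 z) \<le> gauss_kernel 1 z" for k
      by (intro AE_I2) (simp add: abs_mult abs_of_nonneg gauss_kernel_nonneg mult_left_le_one_le h)
  qed (auto intro: integrable_gauss_kernel)
  then show ?thesis
    using integral_gauss_kernel[of 1, where 'a='a] by simp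
qed

section \<open>Inversion for an integrable characteristic function\<close>

definition cutoff :: "nat \<Rightarrow> 'a::metric_space set \<Rightarrow> 'a \<Rightarrow> real" where
  "cutoff k B x = min 1 (real k * infdist x (- B))"

lemma continuous_on_cutoff: "continuous_on UNIV (cutoff k B)"
  unfolding cutoff_def[abs_def] by (intro continuous_intros)

lemma cutoff_nonneg: "0 \<le> cutoff k B x"
  by (simp add: cutoff_def infdist_nonneg)

lemma cutoff_le_indicator: "cutoff k B x \<le> indicator B x"
  by (cases "x \<in> B") (simp_all add: cutoff_def)

lemma tendsto_cutoff:
  assumes "open B" and "B \<noteq> UNIV"
  shows "(\<lambda>k. cutoff k B x) \<longlonglongrightarrow> indicator B x"
proof (cases "x \<in> B")
  case True
  have d: "0 < infdist x (- B)"
    using True assms by (intro infdist_pos_not_in_closed) auto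
  then obtain N :: nat where N: "1 < real N * infdist x (- B)"
    using reals_Archimedean3 by blast
  have "cutoff k B x = indicator B x" if "N \<le> k" for k
  proof -
    have "real N * infdist x (- B) \<le> real k * infdist x (- B)"
      using that d by (intro mult_right_mono) auto
    then show ?thesis
      using N True by (simp add: cutoff_def)
  qed
  then show ?thesis
    by (intro tendsto_eventually eventually_sequentiallyI)
next
  case False
  then show ?thesis by (simp add: cutoff_def)
qed

lemma (in prob_space) borel_measurable_cf_vector:
  assumes [measurable]: "X \<in> borel_measurable M"
  shows "(\<lambda>t::'v::euclidean_space. CLINT \<omega>|M. exp (\<i> * complex_of_real (t \<bullet> X \<omega>))) \<in> borel_measurable borel"
proof (rule borel_measurable_lebesgue_integral)
  show "(\<lambda>(t, \<omega>). exp (\<i> * complex_of_real (t \<bullet> X \<omega>))) \<in> borel_measurable (borel \<Otimes>\<^sub>M M)"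
    by measurable
qed

locale random_vector_integrable_cf = prob_space P for P :: "'w measure" +
  fixes X :: "'w \<Rightarrow> 'a::euclidean_space" and \<phi> :: "'a \<Rightarrow> complex"
  assumes random_vector[measurable]: "X \<in> borel_measurable P"
    and cf: "\<phi> t = (CLINT \<omega>|P. exp (\<i> * complex_of_real (t \<bullet> X \<omega>)))"
    and integrable_cf: "integrable lborel \<phi>"
begin

definition smoothed_density :: "real \<Rightarrow> 'a \<Rightarrow> real" where
  "smoothed_density \<sigma> x = (\<integral>\<omega>. gauss_kernel \<sigma> (x - X \<omega>) \<partial>P)"

text \<open>Taking the real part loses nothing, see \<open>fourier_transform_cf_real\<close>.\<close>

definition inversion_density :: "'a \<Rightarrow> real" where
  "inversion_density x = Re (fourier_transform \<phi> x) / (2 * pi) ^ DIM('a)"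

definition density_bound :: real where
  "density_bound = (\<integral>t. norm (\<phi> t) \<partial>lborel) / (2 * pi) ^ DIM('a)"

lemma density_bound_nonneg: "0 \<le> density_bound"
  unfolding density_bound_def by (simp add: Bochner_Integration.integral_nonneg)

lemma borel_measurable_smoothed_density[measurable]: "smoothed_density \<sigma> \<in> borel_measurable borel"
  unfolding smoothed_density_def[abs_def] by measurable

lemma smoothed_density_nonneg: "0 \<le> smoothed_density \<sigma> x"
  unfolding smoothed_density_def by (intro Bochner_Integration.integral_nonneg gauss_kernel_nonneg)

lemma fourier_transform_gauss_damped_cf:
  assumes \<sigma>: "0 < \<sigma>"
  shows "fourier_transform (\<lambda>t. \<phi> t * gauss_cf \<sigma> t) x =
    complex_of_real ((2 * pi) ^ DIM('a) * smoothed_density \<sigma> x)"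
proof -
  interpret pair_sigma_finite P "lborel :: 'a measure"
    by (simp add: pair_sigma_finite_def prob_space_axioms lborel.sigma_finite_measure_axioms
        prob_space_imp_sigma_finite)
  define F where "F \<omega> t = exp (- (\<i> * complex_of_real (t \<bullet> (x - X \<omega>)))) * gauss_cf \<sigma> t" for \<omega> t
  have [measurable]: "(\<lambda>(\<omega>, t). F \<omega> t) \<in> borel_measurable (P \<Otimes>\<^sub>M lborel)"
    unfolding F_def by measurable
  have F_norm: "norm (F \<omega> t) = exp (- (\<sigma>\<^sup>2 * (norm t)\<^sup>2) / 2)" for \<omega> t
    unfolding F_def gauss_cf_def norm_mult norm_exp_minus_i_times by simp
  have F_integrable: "integrable (P \<Otimes>\<^sub>M lborel) (\<lambda>(\<omega>, t). F \<omega> t)"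
  proof (rule Fubini_integrable)
    show "AE \<omega> in P. integrable lborel (\<lambda>t. case (\<omega>, t) of (\<omega>, t) \<Rightarrow> F \<omega> t)"
      unfolding F_def using integrable_fourier_gauss_cf[OF \<sigma>] by (intro AE_I2) simp
  qed (simp_all add: F_norm)
  have F_split: "F \<omega> t = exp (- (\<i> * complex_of_real (t \<bullet> x))) * gauss_cf \<sigma> t * exp (\<i> * complex_of_real (t \<bullet> X \<omega>))"
    for \<omega> t
  proof -
    have "- (\<i> * complex_of_real (t \<bullet> (x - X \<omega>))) =
        - (\<i> * complex_of_real (t \<bullet> x)) + \<i> * complex_of_real (t \<bullet> X \<omega>)"
      by (simp add: inner_diff_right algebra_simps)
    then show ?thesis
      unfolding F_def by (simp only: exp_add mult_ac)
  qed
  have "complex_of_real ((2 * pi) ^ DIM('a) * smoothed_density \<sigma> x) =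
      (\<integral>\<omega>. complex_of_real ((2 * pi) ^ DIM('a) * gauss_kernel \<sigma> (x - X \<omega>)) \<partial>P)"
    unfolding smoothed_density_def by (simp add: integral_complex_of_real)
  also have "\<dots> = (\<integral>\<omega>. (\<integral>t. F \<omega> t \<partial>lborel) \<partial>P)"
    by (simp only: F_def fourier_transform_gauss_cf[OF \<sigma>, symmetric] fourier_transform_def)
  also have "\<dots> = (\<integral>t. (\<integral>\<omega>. F \<omega> t \<partial>P) \<partial>lborel)"
    using Fubini_integral[OF F_integrable] by simp
  also have "\<dots> = fourier_transform (\<lambda>t. \<phi> t * gauss_cf \<sigma> t) x"
    unfolding fourier_transform_def F_split integral_mult_right_zero cf[symmetric] by (simp add: mult_ac)
  finally show ?thesis ..
qed

lemma smoothed_density_le: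
  assumes \<sigma>: "0 < \<sigma>"
  shows "smoothed_density \<sigma> x \<le> density_bound"
proof -
  have damped_le: "norm (\<phi> t * gauss_cf \<sigma> t) \<le> norm (\<phi> t)" for t
    by (simp add: norm_mult mult_left_le norm_gauss_cf_le_1)
  have damped_integrable: "integrable lborel (\<lambda>t. \<phi> t * gauss_cf \<sigma> t)"
    by (rule Bochner_Integration.integrable_bound[OF integrable_norm[OF integrable_cf]])
       (use integrable_cf damped_le in auto)
  have "(2 * pi) ^ DIM('a) * smoothed_density \<sigma> x = norm (fourier_transform (\<lambda>t. \<phi> t * gauss_cf \<sigma> t) x)"
    using smoothed_density_nonneg[of \<sigma> x]
    unfolding fourier_transform_gauss_damped_cf[OF \<sigma>] norm_of_real by simp
  also have "\<dots> \<le> (\<integral>t. norm (\<phi> t * gauss_cf \<sigma> t) \<partial>lborel)"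
    by (rule norm_fourier_transform_le[OF damped_integrable])
  also have "\<dots> \<le> (\<integral>t. norm (\<phi> t) \<partial>lborel)"
    by (intro Bochner_Integration.integral_mono integrable_norm damped_integrable integrable_cf damped_le)
  finally show ?thesis
    by (simp add: density_bound_def field_simps)
qed

lemma norm_mult_smoothed_density_le:
  assumes "0 < \<sigma>" and "\<bar>h x\<bar> \<le> indicator (cbox l u) x"
  shows "norm (h x * smoothed_density \<sigma> x) \<le> density_bound * indicator (cbox l u) x"
  using mult_mono[OF assms(2) smoothed_density_le[OF assms(1)]]
  by (simp add: abs_mult smoothed_density_nonneg density_bound_nonneg mult.commute)

lemma tendsto_complex_smoothed_density:
  assumes "\<sigma> \<longlonglongrightarrow> 0" and "\<And>k. 0 < \<sigma> k"
  shows "(\<lambda>k. complex_of_real ((2 * pi) ^ DIM('a) * smoothed_density (\<sigma> k) x)) \<longlonglongrightarrow> fourier_transform \<phi> x"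
  using tendsto_fourier_transform_gauss_damped[OF integrable_cf assms(1)]
  by (simp add: fourier_transform_gauss_damped_cf assms(2))

lemma fourier_transform_cf_real:
  "fourier_transform \<phi> x = complex_of_real ((2 * pi) ^ DIM('a) * inversion_density x)"
proof -
  have "(\<lambda>k. complex_of_real ((2 * pi) ^ DIM('a) * smoothed_density (inverse (Suc k)) x))
      \<longlonglongrightarrow> fourier_transform \<phi> x"
    by (intro tendsto_complex_smoothed_density LIMSEQ_inverse_real_of_nat) simp
  from tendsto_Im[OF this] have "Im (fourier_transform \<phi> x) = 0"
    by (simp add: LIMSEQ_const_iff)
  then show ?thesis
    by (simp add: inversion_density_def complex_eq_iff)
qed

lemma tendsto_smoothed_density:
  assumes "\<sigma> \<longlonglongrightarrow> 0" and "\<And>k. 0 < \<sigma> k"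
  shows "(\<lambda>k. smoothed_density (\<sigma> k) x) \<longlonglongrightarrow> inversion_density x"
proof -
  have "(\<lambda>k. (2 * pi) ^ DIM('a) * smoothed_density (\<sigma> k) x) \<longlonglongrightarrow> Re (fourier_transform \<phi> x)"
    using tendsto_Re[OF tendsto_complex_smoothed_density[OF assms]] by simp
  from tendsto_divide[OF this tendsto_const[of "(2 * pi) ^ DIM('a)"]] show ?thesis
    by (simp add: inversion_density_def)
qed

lemma inversion_density_nonneg: "0 \<le> inversion_density x"
  and inversion_density_le: "inversion_density x \<le> density_bound"
proof -
  have lim: "(\<lambda>k. smoothed_density (inverse (Suc k)) x) \<longlonglongrightarrow> inversion_density x"
    by (intro tendsto_smoothed_density LIMSEQ_inverse_real_of_nat) simp
  show "0 \<le> inversion_density x"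
    using lim by (rule LIMSEQ_le_const) (intro exI allI impI smoothed_density_nonneg)
  show "inversion_density x \<le> density_bound"
    using lim by (rule LIMSEQ_le_const2) (intro exI allI impI smoothed_density_le, simp)
qed

lemma norm_mult_inversion_density_le:
  assumes "\<bar>h x\<bar> \<le> indicator (cbox l u) x"
  shows "norm (h x * inversion_density x) \<le> density_bound * indicator (cbox l u) x"
  using mult_mono[OF assms inversion_density_le]
  by (simp add: abs_mult inversion_density_nonneg density_bound_nonneg mult.commute)

lemma continuous_on_inversion_density: "continuous_on UNIV inversion_density"
  unfolding inversion_density_def
  by (intro continuous_intros continuous_on_fourier_transform integrable_cf) simp

lemma borel_measurable_inversion_density[measurable]: "inversion_density \<in> borel_measurable borel"
  by (rule borel_measurable_continuous_onI[OF continuous_on_inversion_density])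

lemma integral_mult_smoothed_density:
  fixes h :: "'a \<Rightarrow> real"
  assumes [measurable]: "h \<in> borel_measurable borel"
    and h: "\<And>x. \<bar>h x\<bar> \<le> indicator (cbox l u) x" and \<sigma>: "0 < \<sigma>"
  shows "(\<integral>x. h x * smoothed_density \<sigma> x \<partial>lborel) =
    (\<integral>\<omega>. (\<integral>z. h (X \<omega> + \<sigma> *\<^sub>R z) * gauss_kernel 1 z \<partial>lborel) \<partial>P)"
proof -
  interpret pair_sigma_finite P "lborel :: 'a measure"
    by (simp add: pair_sigma_finite_def prob_space_axioms lborel.sigma_finite_measure_axioms
        prob_space_imp_sigma_finite)
  define K where "K = (1 / sqrt (2 * pi * \<sigma>\<^sup>2)) ^ DIM('a)"
  have bound: "norm (h x * gauss_kernel \<sigma> (x - y)) \<le> K * indicator (cbox l u) x" for x y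
    unfolding K_def by (rule norm_mult_gauss_kernel_le[OF h])
  have integrable_x: "integrable lborel (\<lambda>x. h x * gauss_kernel \<sigma> (x - y))" for y
  proof (rule Bochner_Integration.integrable_bound[OF integrable_mult_indicator_cbox[of K l u]])
    show "AE x in lborel. norm (h x * gauss_kernel \<sigma> (x - y)) \<le> norm (K * indicator (cbox l u) x)"
      by (intro AE_I2 order_trans[OF bound]) simp
  qed simp
  have "integrable (P \<Otimes>\<^sub>M lborel) (\<lambda>(\<omega>, x). h x * gauss_kernel \<sigma> (x - X \<omega>))"
  proof (rule Fubini_integrable)
    show "integrable P (\<lambda>\<omega>. \<integral>x. norm (case (\<omega>, x) of (\<omega>, x) \<Rightarrow> h x * gauss_kernel \<sigma> (x - X \<omega>)) \<partial>lborel)"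
    proof (rule integrable_const_bound[where B="\<integral>x. K * indicator (cbox l u) x \<partial>lborel"])
      have "(\<integral>x. norm (h x * gauss_kernel \<sigma> (x - X \<omega>)) \<partial>lborel) \<le> (\<integral>x. K * indicator (cbox l u) x \<partial>lborel)" for \<omega>
        by (intro Bochner_Integration.integral_mono integrable_mult_indicator_cbox bound
            integrable_norm integrable_x)
      then show "AE \<omega> in P. norm (\<integral>x. norm (case (\<omega>, x) of (\<omega>, x) \<Rightarrow> h x * gauss_kernel \<sigma> (x - X \<omega>)) \<partial>lborel)
          \<le> (\<integral>x. K * indicator (cbox l u) x \<partial>lborel)"
        by (simp add: Bochner_Integration.integral_nonneg)
    qed measurable
  qed (use integrable_x in simp_all)
  then have "(\<integral>x. (\<integral>\<omega>. h x * gauss_kernel \<sigma> (x - X \<omega>) \<partial>P) \<partial>lborel) =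
      (\<integral>\<omega>. (\<integral>x. h x * gauss_kernel \<sigma> (x - X \<omega>) \<partial>lborel) \<partial>P)"
    by (rule Fubini_integral)
  then show ?thesis
    by (simp add: smoothed_density_def lborel_integral_gauss_kernel_affine[OF _ \<sigma>])
qed

lemma integral_continuous_test_function:
  fixes h :: "'a \<Rightarrow> real"
  assumes h_cont: "continuous_on UNIV h" and h: "\<And>x. \<bar>h x\<bar> \<le> indicator (cbox l u) x"
  shows "(\<integral>\<omega>. h (X \<omega>) \<partial>P) = (\<integral>x. h x * inversion_density x \<partial>lborel)"
proof -
  have [measurable]: "h \<in> borel_measurable borel"
    by (rule borel_measurable_continuous_onI[OF h_cont])
  have h_le_1: "\<bar>h x\<bar> \<le> 1" for x
    using h[of x] by (cases "x \<in> cbox l u") auto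
  define \<sigma> :: "nat \<Rightarrow> real" where "\<sigma> k = inverse (Suc k)" for k
  have \<sigma>: "\<sigma> \<longlonglongrightarrow> 0" "0 < \<sigma> k" for k
    unfolding \<sigma>_def using LIMSEQ_inverse_real_of_nat by simp_all
  have "(\<lambda>k. \<integral>\<omega>. (\<integral>z. h (X \<omega> + \<sigma> k *\<^sub>R z) * gauss_kernel 1 z \<partial>lborel) \<partial>P) \<longlonglongrightarrow> (\<integral>\<omega>. h (X \<omega>) \<partial>P)"
  proof (rule integral_dominated_convergence[where w="\<lambda>_. 1"])
    show "AE \<omega> in P. (\<lambda>k. \<integral>z. h (X \<omega> + \<sigma> k *\<^sub>R z) * gauss_kernel 1 z \<partial>lborel) \<longlonglongrightarrow> h (X \<omega>)"
      by (intro AE_I2 tendsto_integral_gauss_kernel_shift h_cont h_le_1 \<sigma>)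
    show "AE \<omega> in P. norm (\<integral>z. h (X \<omega> + \<sigma> k *\<^sub>R z) * gauss_kernel 1 z \<partial>lborel) \<le> 1" for k
      by (intro AE_I2 norm_integral_gauss_kernel_shift_le h_le_1) measurable
  qed simp_all
  then have lim_P: "(\<lambda>k. \<integral>x. h x * smoothed_density (\<sigma> k) x \<partial>lborel) \<longlonglongrightarrow> (\<integral>\<omega>. h (X \<omega>) \<partial>P)"
    by (simp add: integral_mult_smoothed_density[OF _ h \<sigma>(2)])
  have "(\<lambda>k. \<integral>x. h x * smoothed_density (\<sigma> k) x \<partial>lborel) \<longlonglongrightarrow> (\<integral>x. h x * inversion_density x \<partial>lborel)"
  proof (rule integral_dominated_convergence[where w="\<lambda>x. density_bound * indicator (cbox l u) x"])
    show "AE x in lborel. (\<lambda>k. h x * smoothed_density (\<sigma> k) x) \<longlonglongrightarrow> h x * inversion_density x"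
      by (intro AE_I2 tendsto_intros tendsto_smoothed_density \<sigma>)
    show "AE x in lborel. norm (h x * smoothed_density (\<sigma> k) x) \<le> density_bound * indicator (cbox l u) x" for k
      by (intro AE_I2 norm_mult_smoothed_density_le \<sigma> h)
  qed (rule integrable_mult_indicator_cbox | simp)+
  from LIMSEQ_unique[OF lim_P this] show ?thesis .
qed

lemma integral_indicator_box:
  "(\<integral>\<omega>. indicator (box a b) (X \<omega>) \<partial>P) = (\<integral>x. indicator (box a b) x * inversion_density x \<partial>lborel)"
proof -
  define B where "B = box a b"
  have "B \<noteq> UNIV"
  proof -
    obtain i :: 'a where "i \<in> Basis" using nonempty_Basis by blast
    then have "a \<notin> B" unfolding B_def mem_box by force
    then show ?thesis by blast
  qed
  then have cutoff_lim: "(\<lambda>k. cutoff k B x) \<longlonglongrightarrow> indicator B x" for x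
    by (intro tendsto_cutoff) (simp_all add: B_def open_box)
  have [measurable]: "cutoff k B \<in> borel_measurable borel" "B \<in> sets borel" for k
    by (simp_all add: B_def borel_measurable_continuous_onI[OF continuous_on_cutoff])
  have B_cbox: "indicator B x \<le> (indicator (cbox a b) x :: real)" for x
    using box_subset_cbox[of a b] by (auto simp: B_def split: split_indicator)
  have cutoff_le: "\<bar>cutoff k B x\<bar> \<le> indicator (cbox a b) x" for k x
    using cutoff_nonneg[of k B x] cutoff_le_indicator[of k B x] B_cbox[of x] by simp
  have "(\<lambda>k. \<integral>\<omega>. cutoff k B (X \<omega>) \<partial>P) \<longlonglongrightarrow> (\<integral>\<omega>. indicator B (X \<omega>) \<partial>P)"
  proof (rule integral_dominated_convergence[where w="\<lambda>_. 1"])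
    show "AE \<omega> in P. norm (cutoff k B (X \<omega>)) \<le> 1" for k
      by (intro AE_I2) (simp add: abs_of_nonneg cutoff_nonneg, simp add: cutoff_def)
  qed (simp_all add: cutoff_lim)
  moreover have "(\<lambda>k. \<integral>x. cutoff k B x * inversion_density x \<partial>lborel) \<longlonglongrightarrow>
      (\<integral>x. indicator B x * inversion_density x \<partial>lborel)"
  proof (rule integral_dominated_convergence[where w="\<lambda>x. density_bound * indicator (cbox a b) x"])
    show "AE x in lborel. (\<lambda>k. cutoff k B x * inversion_density x) \<longlonglongrightarrow> indicator B x * inversion_density x"
      by (intro AE_I2 tendsto_intros cutoff_lim)
    show "AE x in lborel. norm (cutoff k B x * inversion_density x) \<le> density_bound * indicator (cbox a b) x" for k
      by (intro AE_I2 norm_mult_inversion_density_le cutoff_le)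
  qed (rule integrable_mult_indicator_cbox | simp)+
  ultimately show ?thesis
    unfolding B_def[symmetric]
    by (simp add: integral_continuous_test_function[OF continuous_on_cutoff cutoff_le] LIMSEQ_unique)
qed

lemma emeasure_distr_box:
  "emeasure (distr P lborel X) (box a b) = emeasure (density lborel inversion_density) (box a b)"
proof -
  interpret distribution: prob_space "distr P lborel X"
    by (rule prob_space_distr) simp
  have box_le: "\<bar>indicator (box a b) x\<bar> \<le> (indicator (cbox a b) x :: real)" for x
    using box_subset_cbox[of a b] by (auto split: split_indicator)
  have integrable: "integrable lborel (\<lambda>x. indicator (box a b) x * inversion_density x)"
  proof (rule Bochner_Integration.integrable_bound[OF integrable_mult_indicator_cbox[of density_bound a b]])
    show "AE x in lborel. norm (indicator (box a b) x * inversion_density x) \<le>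
        norm (density_bound * indicator (cbox a b) x)"
      using norm_mult_inversion_density_le[where h="indicator (box a b)", OF box_le] density_bound_nonneg
      by (intro AE_I2) simp
  qed simp
  have "emeasure (density lborel inversion_density) (box a b) =
      (\<integral>\<^sup>+x. ennreal (indicator (box a b) x * inversion_density x) \<partial>lborel)"
    by (subst emeasure_density) (auto intro!: nn_integral_cong split: split_indicator)
  also have "\<dots> = ennreal (\<integral>\<omega>. indicator (box a b) (X \<omega>) \<partial>P)"
    unfolding integral_indicator_box
    by (intro nn_integral_eq_integral integrable) (simp_all add: inversion_density_nonneg)
  also have "\<dots> = emeasure (distr P lborel X) (box a b)"
    using integral_distr[of X P lborel "indicator (box a b) :: 'a \<Rightarrow> real"]
    by (simp add: distribution.emeasure_eq_measure)
  finally show ?thesis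
    by (rule sym)
qed

lemma distributed_inversion_density: "distributed P lborel X inversion_density"
  unfolding distributed_def
proof (intro conjI)
  let ?E = "range (\<lambda>(a, b). box a b :: 'a set)"
  let ?A = "\<lambda>n::nat. box (- (real n *\<^sub>R One)) (real n *\<^sub>R One) :: 'a set"
  show "distr P lborel X = density lborel inversion_density"
  proof (rule measure_eqI_generator_eq[where E="?E" and A="?A"])
    show "Int_stable ?E"
      by (auto simp: Int_stable_def box_Int_box)
    show "?E \<subseteq> Pow UNIV" "sets (distr P lborel X) = sigma_sets UNIV ?E"
      "sets (density lborel inversion_density) = sigma_sets UNIV ?E"
      by (simp_all add: borel_eq_box)
    show "range ?A \<subseteq> ?E" "(\<Union>i. ?A i) = UNIV"
      unfolding UN_box_eq_UNIV by auto
    show "emeasure (distr P lborel X) (?A i) \<noteq> \<infinity>" for i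
      by (simp add: emeasure_distr)
    show "emeasure (distr P lborel X) B = emeasure (density lborel inversion_density) B" if "B \<in> ?E" for B
      using that emeasure_distr_box by auto
  qed
qed (simp_all add: inversion_density_nonneg)

end

section \<open>Characteristic sum-product networks\<close>

lemma norm_sum_list_convex_le:
  fixes g :: "'b \<Rightarrow> 'c::real_normed_field"
  assumes "\<And>p. p \<in> set cs \<Longrightarrow> 0 \<le> fst p" and "\<And>p. p \<in> set cs \<Longrightarrow> norm (g (snd p)) \<le> B"
  shows "norm (\<Sum>p\<leftarrow>cs. of_real (fst p) * g (snd p)) \<le> (\<Sum>p\<leftarrow>cs. fst p) * B"
  using assms
proof (induction cs)
  case (Cons p cs)
  have "norm (of_real (fst p) * g (snd p) :: 'c) \<le> fst p * B"
    using Cons.prems[of p] by (simp add: norm_mult abs_of_nonneg mult_left_mono)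
  moreover have "norm (\<Sum>q\<leftarrow>cs. of_real (fst q) * g (snd q)) \<le> (\<Sum>q\<leftarrow>cs. fst q) * B"
    using Cons by simp
  ultimately show ?case
    by (simp add: distrib_right order_trans[OF norm_triangle_ineq])
qed simp

lemma norm_prod_list_le_prod_disjoint:
  fixes g :: "'b \<Rightarrow> 'c::real_normed_field" and \<beta> :: "'j \<Rightarrow> real"
  assumes "\<And>N. N \<in> set cs \<Longrightarrow> norm (g N) \<le> (\<Prod>j\<in>S N. \<beta> j)"
    and "\<And>j. 0 \<le> \<beta> j" and "\<And>N. finite (S N)"
    and "\<forall>i<length cs. \<forall>k<length cs. i \<noteq> k \<longrightarrow> S (cs ! i) \<inter> S (cs ! k) = {}"
  shows "norm (\<Prod>N\<leftarrow>cs. g N) \<le> (\<Prod>j\<in>(\<Union>N\<in>set cs. S N). \<beta> j)"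
  using assms(1,4)
proof (induction cs)
  case (Cons N cs)
  have "\<forall>i<length cs. \<forall>k<length cs. i \<noteq> k \<longrightarrow> S (cs ! i) \<inter> S (cs ! k) = {}"
    using Cons.prems(2) by (metis Suc_less_eq nat.inject nth_Cons_Suc length_Cons)
  then have IH: "norm (\<Prod>N\<leftarrow>cs. g N) \<le> (\<Prod>j\<in>(\<Union>N\<in>set cs. S N). \<beta> j)"
    using Cons by simp
  have "S N \<inter> S M = {}" if M: "M \<in> set cs" for M
  proof -
    obtain k where "k < length cs" "M = cs ! k"
      using M by (auto simp: in_set_conv_nth)
    then show ?thesis
      using Cons.prems(2)[rule_format, of 0 "Suc k"] by simp
  qed
  then have disjoint: "S N \<inter> (\<Union>M\<in>set cs. S M) = {}"
    by blast
  have "norm (\<Prod>M\<leftarrow>N # cs. g M) = norm (g N) * norm (\<Prod>M\<leftarrow>cs. g M)"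
    by (simp add: norm_mult)
  also have "\<dots> \<le> (\<Prod>j\<in>S N. \<beta> j) * (\<Prod>j\<in>(\<Union>M\<in>set cs. S M). \<beta> j)"
    using Cons.prems(1) IH by (intro mult_mono) (auto intro: prod_nonneg assms(2))
  also have "\<dots> = (\<Prod>j\<in>(\<Union>M\<in>set (N # cs). S M). \<beta> j)"
    using disjoint assms(3) by (simp add: prod.union_disjoint)
  finally show ?case .
qed simp

lemma finite_leaves: "finite (leaves N)"
  by (induction N rule: leaves.induct) auto

lemma real_distribution_leaf: "valid N \<Longrightarrow> (j, M) \<in> leaves N \<Longrightarrow> real_distribution M"
  by (induction N rule: valid.induct) auto

lemma sc_child_SumN:
  assumes "valid (SumN cs)" and p: "p \<in> set cs"
  shows "sc (snd p) = sc (SumN cs)"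
proof -
  have "\<And>q. q \<in> set cs \<Longrightarrow> sc (snd q) = sc (snd p)"
    using assms unfolding valid.simps by blast
  then have "sc (SumN cs) = (\<Union>q\<in>set cs. sc (snd p))"
    unfolding sc.simps by (rule SUP_cong[OF refl])
  then show ?thesis
    using p by auto
qed

lemma norm_phi_le_prod:
  fixes N :: "'n::finite chispn" and \<beta> :: "'n \<Rightarrow> real \<Rightarrow> real"
  assumes "valid N" and \<beta>_nonneg: "\<And>j s. 0 \<le> \<beta> j s"
    and "\<And>j M s. (j, M) \<in> leaves N \<Longrightarrow> norm (char M s) \<le> \<beta> j s"
  shows "norm (phi N t) \<le> (\<Prod>j\<in>sc N. \<beta> j (t $ j))"
  using assms(1,3)
proof (induction N rule: valid.induct)
  case (1 j M)
  then show ?case by simp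
next
  case (2 cs)
  \<comment> \<open>Not simp: the equations between the children's scopes would loop.\<close>
  have child_valid: "\<And>p. p \<in> set cs \<Longrightarrow> 0 \<le> fst p \<and> valid (snd p)"
    and weight_sum: "(\<Sum>p\<leftarrow>cs. fst p) = 1"
    using "2.prems"(1) unfolding valid.simps by blast+
  have "norm (phi (snd p) t) \<le> (\<Prod>j\<in>sc (SumN cs). \<beta> j (t $ j))" if p: "p \<in> set cs" for p
  proof -
    have "norm (char M s) \<le> \<beta> j s" if "(j, M) \<in> leaves (snd p)" for j M s
      using that p by (intro "2.prems"(2)) auto
    then show ?thesis
      using "2.IH"[OF p] child_valid[OF p] sc_child_SumN[OF "2.prems"(1) p] by simp
  qed
  then show ?case
    using norm_sum_list_convex_le[of cs "\<lambda>N. phi N t"] child_valid weight_sum by simp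
next
  case (3 cs)
  have "norm (phi N t) \<le> (\<Prod>j\<in>sc N. \<beta> j (t $ j))" if N: "N \<in> set cs" for N
  proof (rule "3.IH"[OF N])
    show "valid N"
      using N "3.prems"(1) by simp
    show "norm (char M s) \<le> \<beta> j s" if "(j, M) \<in> leaves N" for j M s
      using that N by (intro "3.prems"(2)) auto
  qed
  moreover have "\<forall>i<length cs. \<forall>k<length cs. i \<noteq> k \<longrightarrow> sc (cs ! i) \<inter> sc (cs ! k) = {}"
    using "3.prems"(1) by simp
  ultimately show ?case
    using norm_prod_list_le_prod_disjoint[where g="\<lambda>N. phi N t" and S=sc and \<beta>="\<lambda>j. \<beta> j (t $ j)"] \<beta>_nonneg by simp
qed

lemma integrable_phi:
  fixes C :: "'n::finite chispn"
  assumes "valid C" and "sc C = UNIV" and "phi C \<in> borel_measurable lborel"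
    and "\<And>j M. (j, M) \<in> leaves C \<Longrightarrow> (\<integral>\<^sup>+ t. ennreal (cmod (char M t)) \<partial>lborel) < \<infinity>"
  shows "integrable lborel (phi C)"
proof -
  define \<beta> where "\<beta> j s = (\<Sum>L\<in>leaves C \<inter> {j} \<times> UNIV. norm (char (snd L) s))" for j s
  have \<beta>_nonneg: "0 \<le> \<beta> j s" for j s
    unfolding \<beta>_def by (intro sum_nonneg) simp
  have leaf_le_\<beta>: "norm (char M s) \<le> \<beta> j s" if "(j, M) \<in> leaves C" for j M s
    unfolding \<beta>_def using that finite_leaves[of C]
    by (intro member_le_sum[where f="\<lambda>L. norm (char (snd L) s)" and i="(j, M)", simplified]) auto
  have leaf_integrable: "integrable lborel (\<lambda>s. norm (char M s))" if "(j, M) \<in> leaves C" for j M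
    using assms(4)[OF that] real_distribution.char_measurable[OF real_distribution_leaf[OF assms(1) that]]
    by (intro integrableI_bounded) auto
  have "integrable lborel (\<beta> j)" for j
    unfolding \<beta>_def[abs_def] by (intro Bochner_Integration.integrable_sum) (auto intro: leaf_integrable)
  then have bound_integrable: "integrable lborel (\<lambda>t. \<Prod>j\<in>UNIV. \<beta> j (t $ j))"
    by (rule integrable_lborel_prod_vec)
  show ?thesis
  proof (rule Bochner_Integration.integrable_bound[OF bound_integrable assms(3)])
    have bound: "norm (phi C t) \<le> (\<Prod>j\<in>UNIV. \<beta> j (t $ j))" for t
      using norm_phi_le_prod[OF assms(1) \<beta>_nonneg leaf_le_\<beta>] assms(2) by simp
    show "AE t in lborel. norm (phi C t) \<le> norm (\<Prod>j\<in>UNIV. \<beta> j (t $ j))"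
      by (intro AE_I2, simp only: real_norm_def, rule order_trans[OF bound abs_ge_self])
  qed
qed

theorem lemma1:
  fixes C :: "'n::finite chispn"
    and P :: "'w measure"
    and X :: "'w \<Rightarrow> real ^ 'n"
  assumes "valid C"
    and "sc C = UNIV"
    and "prob_space P"
    and "X \<in> measurable P borel"
    and "\<And>t. (CLINT \<omega>|P. exp (\<i> * complex_of_real (t \<bullet> X \<omega>))) = phi C t"
    and "\<And>j M. (j, M) \<in> leaves C \<Longrightarrow>
           (\<integral>\<^sup>+ t. ennreal (cmod (char M t)) \<partial>lborel) < \<infinity>"
  shows "\<exists>f :: real ^ 'n \<Rightarrow> real.
           continuous_on UNIV f \<and> (\<forall>x. 0 \<le> f x) \<and>
           distributed P lborel X (\<lambda>x. ennreal (f x)) \<and>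
           (\<forall>x. complex_of_real (f x) =
                 (1 / (2 * pi) ^ CARD('n)) *
                 (CLINT t|lborel. exp (- (\<i> * complex_of_real (t \<bullet> x))) * phi C t))"
proof -
  have "phi C \<in> borel_measurable lborel"
    using prob_space.borel_measurable_cf_vector[OF assms(3,4)] assms(5) by simp
  with assms(1,2,6) have "integrable lborel (phi C)"
    by (intro integrable_phi)
  then interpret random_vector_integrable_cf P X "phi C"
    using assms(3-5) by (simp add: random_vector_integrable_cf_def random_vector_integrable_cf_axioms_def)
  show ?thesis
    by (intro exI[of _ inversion_density] conjI allI continuous_on_inversion_density
        inversion_density_nonneg distributed_inversion_density)
       (simp add: fourier_transform_cf_real flip: fourier_transform_def)
qed

end
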